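(* Let $\sigma=(a_1,\ldots,a_s)$ be a partition of $r$ and let $H=H(n,r,q\mid\sigma)$ with $n\ge s$ and $q\ge r$. If $r\mid q$, then $H$ has a perfect matching.
   Context: A $\sigma$-hypergraph $H=H(n,r,q\mid\sigma)$, for a partition $\sigma=(a_1,\ldots,a_s)$ of $r$ with $s$ parts, is the $r$-uniform hypergraph whose vertex set is the disjoint union of $n$ classes $V_1,\ldots,V_n$, each of size $q$; an $r$-subset $K$ of vertices is an edge iff the multiset of non-zero values $|K\cap V_i|$ equals $\sigma$. A perfect matching is a set of pairwise vertex-disjoint edges covering every vertex. *)

theory Defs
  imports Main "HOL-Library.Multiset"
begin

text \<open>Vertex set of H(n,r,q|sigma): classes V_i = {i} x {..<q} for i < n.\<close>
definition sigma_vertices :: "nat \<Rightarrow> nat \<Rightarrow> (nat \<times> nat) set" where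
  "sigma_vertices n q = {..<n} \<times> {..<q}"

definition is_partition :: "nat multiset \<Rightarrow> nat \<Rightarrow> bool" where
  "is_partition \<sigma> r \<longleftrightarrow> 0 \<notin># \<sigma> \<and> sum_mset \<sigma> = r"

definition sigma_edges :: "nat \<Rightarrow> nat \<Rightarrow> nat \<Rightarrow> nat multiset \<Rightarrow> (nat \<times> nat) set set" where
  "sigma_edges n r q \<sigma> = {K. K \<subseteq> sigma_vertices n q \<and> card K = r \<and>
     filter_mset (\<lambda>x. x \<noteq> 0)
       (image_mset (\<lambda>i. card (K \<inter> ({i} \<times> {..<q}))) (mset_set {..<n})) = \<sigma>}"

definition has_perfect_matching :: "nat \<Rightarrow> nat \<Rightarrow> nat \<Rightarrow> nat multiset \<Rightarrow> bool" where
  "has_perfect_matching n r q \<sigma> \<longleftrightarrow>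
     (\<exists>M. M \<subseteq> sigma_edges n r q \<sigma> \<and>
          (\<forall>e\<in>M. \<forall>f\<in>M. e \<noteq> f \<longrightarrow> e \<inter> f = {}) \<and>
          \<Union>M = sigma_vertices n q)"

end

theory Submission
  imports Defs
begin

text \<open>Order the parts of \<sigma> as a list a and cut the vertices into blocks of r consecutive
  positions in every class. Inside the k-th block, the intervals of lengths a!0, a!1, ...
  placed in the classes t, t+1, ... (mod n) form an edge with profile \<sigma>, since distinct
  parts go to distinct classes as long as length a \<le> n. For fixed k the n cyclic shifts t
  tile the k-th block of all classes, and the q div r blocks exhaust the vertex set.\<close>

definition part_offset :: "nat list \<Rightarrow> nat \<Rightarrow> nat" where
  "part_offset a j = sum_list (take j a)"

definition block_edge :: "nat \<Rightarrow> nat list \<Rightarrow> nat \<Rightarrow> nat \<Rightarrow> (nat \<times> nat) set" where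
  "block_edge n a k t =
     (\<Union>j<length a. {(t + j) mod n} \<times>
        {k * sum_list a + part_offset a j ..< k * sum_list a + part_offset a (Suc j)})"

lemma part_offset_Suc: "j < length a \<Longrightarrow> part_offset a (Suc j) = part_offset a j + a ! j"
  by (simp add: part_offset_def take_Suc_conv_app_nth)

lemma part_offset_mono: "j \<le> j' \<Longrightarrow> part_offset a j \<le> part_offset a j'"
proof -
  assume "j \<le> j'"
  then have "take j a = take j (take j' a)" by (simp add: min_absorb1)
  then have "sum_list (take j' a) = part_offset a j + sum_list (drop j (take j' a))"
    unfolding part_offset_def by (metis append_take_drop_id sum_list_append)
  then show ?thesis by (simp add: part_offset_def)
qed

lemma part_offset_le_sum_list: "part_offset a j \<le> sum_list a"
  using part_offset_mono[of j "max j (length a)" a] by (simp add: part_offset_def)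

lemma part_interval_unique:
  assumes "part_offset a j \<le> w" "w < part_offset a (Suc j)"
    and "part_offset a j' \<le> w" "w < part_offset a (Suc j')"
  shows "j = j'"
proof (rule ccontr)
  assume "j \<noteq> j'"
  then consider "Suc j \<le> j'" | "Suc j' \<le> j" by linarith
  then show False
  proof cases
    case 1
    then have "part_offset a (Suc j) \<le> part_offset a j'" by (rule part_offset_mono)
    with assms show False by linarith
  next
    case 2
    then have "part_offset a (Suc j') \<le> part_offset a j" by (rule part_offset_mono)
    with assms show False by linarith
  qed
qed

lemma part_interval_exists:
  assumes "w < part_offset a s" "s \<le> length a"
  shows "\<exists>j<s. part_offset a j \<le> w \<and> w < part_offset a (Suc j)"
  using assms
proof (induction s)
  case 0
  then show ?case by (simp add: part_offset_def)
next
  case (Suc s)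
  show ?case
  proof (cases "w < part_offset a s")
    case True
    then show ?thesis using Suc by (meson Suc_leD less_Suc_eq)
  next
    case False
    then show ?thesis using Suc.prems by (intro exI[of _ s]) auto
  qed
qed

lemma mem_block_edge:
  "(i, v) \<in> block_edge n a k t \<longleftrightarrow>
     (\<exists>j<length a. i = (t + j) mod n \<and>
        k * sum_list a + part_offset a j \<le> v \<and> v < k * sum_list a + part_offset a (Suc j))"
  unfolding block_edge_def by auto

lemma mod_add_left_inj:
  fixes n :: nat
  assumes "j < n" "j' < n" "(t + j) mod n = (t + j') mod n"
  shows "j = j'"
proof -
  have "j mod n = j' mod n" using assms(3) by (simp add: nat_mod_eq_iff)
  then show ?thesis using assms(1,2) by simp
qed

lemma block_edge_subset:
  assumes "n > 0"
  shows "block_edge n a k t \<subseteq> {..<n} \<times> {k * sum_list a ..< Suc k * sum_list a}"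
proof
  fix x assume "x \<in> block_edge n a k t"
  then obtain j where j: "j < length a" and x: "x \<in> {(t + j) mod n} \<times>
      {k * sum_list a + part_offset a j ..< k * sum_list a + part_offset a (Suc j)}"
    unfolding block_edge_def by blast
  show "x \<in> {..<n} \<times> {k * sum_list a ..< Suc k * sum_list a}"
    using x part_offset_le_sum_list[of a "Suc j"] assms by auto
qed

lemma block_edge_subset_sigma_vertices:
  assumes "n > 0" "Suc k * sum_list a \<le> q"
  shows "block_edge n a k t \<subseteq> sigma_vertices n q"
  using block_edge_subset[OF assms(1)] assms(2) unfolding sigma_vertices_def by fastforce

lemma block_edge_disjoint:
  assumes "length a \<le> n" "t < n" "t' < n"
    and "block_edge n a k t \<inter> block_edge n a k' t' \<noteq> {}"
  shows "k = k' \<and> t = t'"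
proof -
  obtain i v where iv: "(i, v) \<in> block_edge n a k t" "(i, v) \<in> block_edge n a k' t'"
    using assms(4) by auto
  have "n > 0" using assms(2) by simp
  then have "(i, v) \<in> {..<n} \<times> {k * sum_list a ..< Suc k * sum_list a}"
    and "(i, v) \<in> {..<n} \<times> {k' * sum_list a ..< Suc k' * sum_list a}"
    using iv block_edge_subset by blast+
  then have "v div sum_list a = k" and "v div sum_list a = k'"
    by (simp_all add: div_nat_eqI mult.commute)
  then have kk: "k = k'" by simp
  obtain j where j: "j < length a" "i = (t + j) mod n"
      "part_offset a j \<le> v - k * sum_list a" "v - k * sum_list a < part_offset a (Suc j)"
    using iv(1) unfolding mem_block_edge by force
  obtain j' where j': "j' < length a" "i = (t' + j') mod n"
      "part_offset a j' \<le> v - k * sum_list a" "v - k * sum_list a < part_offset a (Suc j')"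
    using iv(2) unfolding mem_block_edge kk by force
  have "j = j'" using part_interval_unique j j' by blast
  then have "t = t'"
    using j(2) j'(2) assms(2,3) mod_add_left_inj[of t n t' j] by (simp add: add.commute)
  with kk show ?thesis ..
qed

lemma block_edge_inter_class:
  assumes "length a \<le> n" "j < n" "Suc k * sum_list a \<le> q"
  shows "block_edge n a k t \<inter> ({(t + j) mod n} \<times> {..<q}) =
    (if j < length a
     then {(t + j) mod n} \<times> {k * sum_list a + part_offset a j ..< k * sum_list a + part_offset a (Suc j)}
     else {})"
proof -
  let ?I = "\<lambda>j. {k * sum_list a + part_offset a j ..< k * sum_list a + part_offset a (Suc j)}"
  show ?thesis
  proof (intro set_eqI iffI)
    fix x assume "x \<in> block_edge n a k t \<inter> ({(t + j) mod n} \<times> {..<q})"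
    then obtain j' v where j': "j' < length a" "x = ((t + j') mod n, v)" "v \<in> ?I j'"
        and same_class: "(t + j') mod n = (t + j) mod n"
      unfolding block_edge_def by blast
    have "j' = j" using mod_add_left_inj[OF _ assms(2) same_class] j'(1) assms(1) by simp
    then show "x \<in> (if j < length a then {(t + j) mod n} \<times> ?I j else {})" using j' by simp
  next
    fix x assume x: "x \<in> (if j < length a then {(t + j) mod n} \<times> ?I j else {})"
    have "k * sum_list a + part_offset a (Suc j) \<le> q"
      using part_offset_le_sum_list[of a "Suc j"] assms(3) by simp
    then show "x \<in> block_edge n a k t \<inter> ({(t + j) mod n} \<times> {..<q})"
      using x unfolding block_edge_def by (auto split: if_splits)
  qed
qed

lemma card_block_edge_inter_class:
  assumes "length a \<le> n" "j < n" "Suc k * sum_list a \<le> q"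
  shows "card (block_edge n a k t \<inter> ({(t + j) mod n} \<times> {..<q})) =
    (if j < length a then a ! j else 0)"
  using block_edge_inter_class[OF assms] by (simp add: card_cartesian_product part_offset_Suc)

lemma bij_betw_rotate_mod:
  fixes n :: nat
  assumes "n > 0"
  shows "bij_betw (\<lambda>j. (t + j) mod n) {..<n} {..<n}"
proof -
  have "inj_on (\<lambda>j. (t + j) mod n) {..<n}"
    by (auto intro: inj_onI mod_add_left_inj)
  moreover have "(\<lambda>j. (t + j) mod n) ` {..<n} = {..<n}"
    using calculation assms by (intro endo_inj_surj) auto
  ultimately show ?thesis by (simp add: bij_betw_def)
qed

lemma image_mset_mset_set_reindex:
  assumes "bij_betw h A A"
  shows "image_mset (f \<circ> h) (mset_set A) = image_mset f (mset_set A)"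
proof -
  have "image_mset (f \<circ> h) (mset_set A) = image_mset f (image_mset h (mset_set A))"
    by (simp add: multiset.map_comp)
  also have "image_mset h (mset_set A) = mset_set A"
    using assms by (simp add: bij_betw_def image_mset_mset_set)
  finally show ?thesis .
qed

lemma filter_nonzero_padded_list:
  fixes a :: "nat list"
  assumes "length a \<le> n" "0 \<notin> set a"
  shows "filter_mset (\<lambda>x. x \<noteq> 0)
           (image_mset (\<lambda>j. if j < length a then a ! j else 0) (mset_set {..<n})) = mset a"
proof -
  let ?g = "\<lambda>j. if j < length a then a ! j else (0::nat)"
  have "[0..<n] = [0..<length a] @ [length a..<n]"
    using assms(1) by (metis le_add_diff_inverse upt_add_eq_append zero_le)
  then have "mset_set {..<n} = mset ([0..<length a] @ [length a..<n])"
    by (metis mset_set_upto_eq_mset_upto)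
  then have split: "image_mset ?g (mset_set {..<n}) = mset (map ?g [0..<length a] @ map ?g [length a..<n])"
    by simp
  have "map ?g [0..<length a] = map (nth a) [0..<length a]"
    by (rule map_cong) auto
  then have prefix: "map ?g [0..<length a] = a" by (simp add: map_nth)
  have padding: "filter (\<lambda>x. x \<noteq> 0) (map ?g [length a..<n]) = []"
    by (simp add: filter_empty_conv)
  have nonzero: "filter (\<lambda>x. x \<noteq> 0) a = a"
    using assms(2) by (induction a) auto
  have "filter_mset (\<lambda>x. x \<noteq> 0) (image_mset ?g (mset_set {..<n}))
      = mset (filter (\<lambda>x. x \<noteq> 0) (map ?g [0..<length a] @ map ?g [length a..<n]))"
    by (simp only: split mset_filter)
  also have "\<dots> = mset a"
    by (simp only: filter_append prefix padding nonzero append_Nil2)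
  finally show ?thesis .
qed

lemma sum_mset_filter_nonzero:
  fixes M :: "'a::comm_monoid_add multiset"
  shows "sum_mset (filter_mset (\<lambda>x. x \<noteq> 0) M) = sum_mset M"
  by (induction M) auto

lemma card_eq_sum_class_cards:
  assumes "K \<subseteq> sigma_vertices n q"
  shows "card K = (\<Sum>i<n. card (K \<inter> ({i} \<times> {..<q})))"
proof -
  have "K = (\<Union>i<n. K \<inter> ({i} \<times> {..<q}))"
    using assms unfolding sigma_vertices_def by auto
  also have "card \<dots> = (\<Sum>i<n. card (K \<inter> ({i} \<times> {..<q})))"
    by (rule card_UN_disjoint) auto
  finally show ?thesis .
qed

lemma sigma_edgesI:
  assumes "K \<subseteq> sigma_vertices n q" "is_partition \<sigma> r"
    and "filter_mset (\<lambda>x. x \<noteq> 0)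
           (image_mset (\<lambda>i. card (K \<inter> ({i} \<times> {..<q}))) (mset_set {..<n})) = \<sigma>"
  shows "K \<in> sigma_edges n r q \<sigma>"
proof -
  have "card K = sum_mset (image_mset (\<lambda>i. card (K \<inter> ({i} \<times> {..<q}))) (mset_set {..<n}))"
    using card_eq_sum_class_cards[OF assms(1)] by (simp add: sum_unfold_sum_mset)
  also have "\<dots> = sum_mset (filter_mset (\<lambda>x. x \<noteq> 0)
                  (image_mset (\<lambda>i. card (K \<inter> ({i} \<times> {..<q}))) (mset_set {..<n})))"
    by (rule sum_mset_filter_nonzero[symmetric])
  also have "\<dots> = sum_mset \<sigma>" by (simp only: assms(3))
  finally have "card K = r" using assms(2) by (simp add: is_partition_def)
  with assms(1,3) show ?thesis by (simp add: sigma_edges_def)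
qed

lemma block_edge_in_sigma_edges:
  assumes "mset a = \<sigma>" "0 \<notin> set a" "0 < n" "length a \<le> n" "Suc k * sum_list a \<le> q"
  shows "block_edge n a k t \<in> sigma_edges n (sum_list a) q \<sigma>"
proof (rule sigma_edgesI)
  show "block_edge n a k t \<subseteq> sigma_vertices n q"
    using block_edge_subset_sigma_vertices[OF assms(3,5)] .
  show "is_partition \<sigma> (sum_list a)"
    using assms(1,2) unfolding is_partition_def by (auto simp flip: sum_mset_sum_list)
  let ?c = "\<lambda>i. card (block_edge n a k t \<inter> ({i} \<times> {..<q}))"
  have "image_mset ?c (mset_set {..<n}) = image_mset (?c \<circ> (\<lambda>j. (t + j) mod n)) (mset_set {..<n})"
    using image_mset_mset_set_reindex[OF bij_betw_rotate_mod[OF assms(3)]] by metis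
  also have "\<dots> = image_mset (\<lambda>j. if j < length a then a ! j else 0) (mset_set {..<n})"
    using card_block_edge_inter_class[OF assms(4) _ assms(5)] by (intro image_mset_cong) simp
  finally show "filter_mset (\<lambda>x. x \<noteq> 0) (image_mset ?c (mset_set {..<n})) = \<sigma>"
    using filter_nonzero_padded_list[OF assms(4,2)] assms(1) by simp
qed

lemma block_edges_cover:
  assumes "length a \<le> n" "i < n" "v < m * sum_list a"
  shows "\<exists>k<m. \<exists>t<n. (i, v) \<in> block_edge n a k t"
proof -
  define k where "k = v div sum_list a"
  define w where "w = v mod sum_list a"
  have "m * sum_list a \<noteq> 0" using assms(3) by linarith
  then have "sum_list a > 0" by (metis mult_0_right neq0_conv)
  then have "k < m" and "w < part_offset a (length a)"
    using assms(3) by (simp_all add: k_def w_def less_mult_imp_div_less part_offset_def)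
  then obtain j where j: "j < length a" "part_offset a j \<le> w" "w < part_offset a (Suc j)"
    using part_interval_exists[of w a "length a"] by auto
  define t where "t = (i + n - j) mod n"
  have "(t + j) mod n = (i + n - j + j) mod n" by (simp add: t_def mod_add_left_eq)
  also have "\<dots> = i" using j(1) assms(1,2) by simp
  finally have "(t + j) mod n = i" .
  moreover have "v = k * sum_list a + w" by (simp add: k_def w_def)
  ultimately have "(i, v) \<in> block_edge n a k t"
    unfolding mem_block_edge using j by (intro exI[of _ j]) simp
  moreover have "t < n" using assms(2) by (simp add: t_def)
  ultimately show ?thesis using \<open>k < m\<close> by blast
qed

lemma Union_block_edges:
  assumes "0 < n" "length a \<le> n"
  shows "\<Union>{block_edge n a k t | k t. k < m \<and> t < n} = sigma_vertices n (m * sum_list a)"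
proof
  have "Suc k * sum_list a \<le> m * sum_list a" if "k < m" for k
    using that by (simp add: mult_le_mono1 Suc_leI del: mult_Suc)
  then show "\<Union>{block_edge n a k t | k t. k < m \<and> t < n} \<subseteq> sigma_vertices n (m * sum_list a)"
    using block_edge_subset_sigma_vertices[OF assms(1)] by blast
  show "sigma_vertices n (m * sum_list a) \<subseteq> \<Union>{block_edge n a k t | k t. k < m \<and> t < n}"
  proof (rule subsetI, clarify)
    fix i v assume "(i, v) \<in> sigma_vertices n (m * sum_list a)"
    then obtain k t where "k < m" "t < n" "(i, v) \<in> block_edge n a k t"
      using block_edges_cover[OF assms(2)] unfolding sigma_vertices_def by blast
    then show "(i, v) \<in> \<Union>{block_edge n a k t | k t. k < m \<and> t < n}" by blast
  qed
qed

theorem lemma3p3: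
  fixes n r q :: nat and \<sigma> :: "nat multiset"
  assumes "is_partition \<sigma> r"
    and "n \<ge> size \<sigma>"
    and "q \<ge> r"
    and "r dvd q"
  shows "has_perfect_matching n r q \<sigma>"
proof (cases "r = 0")
  case True
  then show ?thesis
    using assms(4) unfolding has_perfect_matching_def sigma_vertices_def by auto
next
  case False
  obtain a where a: "mset a = \<sigma>" using ex_mset by blast
  have r: "sum_list a = r" and a0: "0 \<notin> set a"
    using assms(1) a unfolding is_partition_def by (auto simp flip: sum_mset_sum_list)
  have len: "length a \<le> n" using assms(2) a by auto
  have n: "0 < n" using len r False by (cases a) auto
  obtain m where q: "q = m * r" using assms(4) by (metis dvd_def mult.commute)
  let ?M = "{block_edge n a k t | k t. k < m \<and> t < n}"
  have "block_edge n a k t \<in> sigma_edges n r q \<sigma>" if "k < m" for k t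
    using block_edge_in_sigma_edges[OF a a0 n len] mult_le_mono1[of "Suc k" m r] that q r by simp
  then have "?M \<subseteq> sigma_edges n r q \<sigma>" by blast
  moreover have "e \<inter> f = {}" if "e \<in> ?M" "f \<in> ?M" "e \<noteq> f" for e f
    using that block_edge_disjoint[OF len] by blast
  moreover have "\<Union>?M = sigma_vertices n q"
    using Union_block_edges[OF n len] q r by simp
  ultimately show ?thesis unfolding has_perfect_matching_def by (intro exI[of _ ?M]) blast
qed

end
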